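(* Let $f\in\mathbb Z[x,x^{-1}]$ be a Laurent polynomial with integer coefficients which is hyperbolic (no complex root on the unit circle). Then $f\cdot\mathbb Z_{ac}(x)\cap\mathbb Z_{ac}[x)=f\cdot\mathbb Z_{ac}[x)$.
   Context: A formal Laurent series $\sum_{n\in\mathbb Z}c_nx^n$ is almost convergent if $\limsup_{n\to\infty}|c_n|^{1/n}\le1$ and $\limsup_{n\to\infty}|c_{-n}|^{1/n}\le1$. $\mathbb Z_{ac}(x)$ denotes the ring (under formal multiplication where defined; here products with Laurent polynomials) of almost convergent two-sided Laurent series with integer coefficients, and $\mathbb Z_{ac}[x)$ the subset of those of the form $\sum_{n\ge m}a_nx^n$ for some $m\in\mathbb Z$ (only finitely many negative powers). *)

theory Defs
  imports "HOL-Analysis.Analysis"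
begin

text \<open>Two-sided formal Laurent series with integer coefficients are modelled as
  coefficient functions c :: int => int (c n is the coefficient of x^n).\<close>

definition laurent_poly :: "(int \<Rightarrow> int) \<Rightarrow> bool" where
  "laurent_poly f \<longleftrightarrow> finite {k. f k \<noteq> 0}"

definition laurent_eval :: "(int \<Rightarrow> int) \<Rightarrow> complex \<Rightarrow> complex" where
  "laurent_eval f z = (\<Sum>k\<in>{k. f k \<noteq> 0}. of_int (f k) * z powi k)"

definition hyperbolic :: "(int \<Rightarrow> int) \<Rightarrow> bool" where
  "hyperbolic f \<longleftrightarrow> (\<forall>z::complex. norm z = 1 \<longrightarrow> laurent_eval f z \<noteq> 0)"

definition laurent_mult :: "(int \<Rightarrow> int) \<Rightarrow> (int \<Rightarrow> int) \<Rightarrow> (int \<Rightarrow> int)" where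
  "laurent_mult f g = (\<lambda>n. \<Sum>k\<in>{k. f k \<noteq> 0}. f k * g (n - k))"

definition almost_convergent :: "(int \<Rightarrow> int) \<Rightarrow> bool" where
  "almost_convergent c \<longleftrightarrow>
     limsup (\<lambda>n::nat. ereal (root n \<bar>real_of_int (c (int n))\<bar>)) \<le> 1 \<and>
     limsup (\<lambda>n::nat. ereal (root n \<bar>real_of_int (c (- int n))\<bar>)) \<le> 1"

definition Zac :: "(int \<Rightarrow> int) set" where
  "Zac = {c. almost_convergent c}"

definition Zac_right :: "(int \<Rightarrow> int) set" where
  "Zac_right = {c. almost_convergent c \<and> (\<exists>m. \<forall>n<m. c n = 0)}"

end

(*
  Almost convergence of an integer sequence means subexponential growth at both ends.
  Write f = x^s p with p a complex polynomial without roots on the unit circle, and let g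
  be almost convergent with f g vanishing near -\<infinity>.  Splitting p into linear factors
  x - \<alpha>, it suffices to show: if (x - \<alpha>) w decays exponentially towards -\<infinity> and w grows
  subexponentially, then w decays exponentially towards -\<infinity>.  For |\<alpha>| < 1 the recurrence
  w(n-1) = \<alpha> w(n) + v(n) is contracting in the direction of -\<infinity>; for |\<alpha>| > 1 it can be
  solved the other way as a geometric series, whose boundary term vanishes because w grows
  more slowly than |\<alpha>|^n.  So the coefficients of g decay exponentially towards -\<infinity>, and
  being integers they are eventually zero.
*)
theory Submission
  imports Defs "HOL-Computational_Algebra.Fundamental_Theorem_Algebra"
begin

definition subexponential :: "(nat \<Rightarrow> 'a::real_normed_vector) \<Rightarrow> bool" where
  "subexponential X \<longleftrightarrow> (\<forall>\<rho>>1. \<exists>C. \<forall>k. norm (X k) \<le> C * \<rho> ^ k)"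

definition subexponential_int :: "(int \<Rightarrow> 'a::real_normed_vector) \<Rightarrow> bool" where
  "subexponential_int u \<longleftrightarrow> (\<forall>\<rho>>1. \<exists>C. \<forall>n. norm (u n) \<le> C * \<rho> ^ nat \<bar>n\<bar>)"

definition exp_decay :: "(nat \<Rightarrow> 'a::real_normed_vector) \<Rightarrow> bool" where
  "exp_decay X \<longleftrightarrow> (\<exists>C r. 0 \<le> r \<and> r < 1 \<and> (\<forall>k. norm (X k) \<le> C * r ^ k))"

lemma geometric_bound_if_eventually:
  fixes X :: "nat \<Rightarrow> 'a::real_normed_vector"
  assumes "\<rho> > 0" and "eventually (\<lambda>k. norm (X k) \<le> C * \<rho> ^ k) sequentially"
  shows "\<exists>D. \<forall>k. norm (X k) \<le> D * \<rho> ^ k"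
proof -
  obtain N where N: "\<And>k. k \<ge> N \<Longrightarrow> norm (X k) \<le> C * \<rho> ^ k"
    using assms(2) by (auto simp: eventually_sequentially)
  define D where "D = \<bar>C\<bar> + (\<Sum>k<N. norm (X k) / \<rho> ^ k)"
  have "norm (X k) \<le> D * \<rho> ^ k" for k
  proof (cases "k < N")
    case True
    have "norm (X k) / \<rho> ^ k \<le> (\<Sum>k<N. norm (X k) / \<rho> ^ k)"
      by (rule member_le_sum) (use True assms(1) in simp_all)
    also have "\<dots> \<le> D" unfolding D_def by simp
    finally show ?thesis using assms(1) by (simp add: divide_le_eq)
  next
    case False
    have "(\<Sum>k<N. norm (X k) / \<rho> ^ k) \<ge> 0" using assms(1) by (intro sum_nonneg) simp
    then have "C \<le> D" unfolding D_def by linarith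
    then have "C * \<rho> ^ k \<le> D * \<rho> ^ k"
      using assms(1) by (intro mult_right_mono) simp_all
    then show ?thesis using N[of k] False by simp
  qed
  then show ?thesis by blast
qed

lemma exp_decay_eventually_zero:
  fixes X :: "nat \<Rightarrow> 'a::real_normed_vector"
  assumes "eventually (\<lambda>k. X k = 0) sequentially"
  shows "exp_decay X"
proof -
  have "eventually (\<lambda>k. norm (X k) \<le> 0 * (1/2) ^ k) sequentially"
    using assms by eventually_elim simp
  then have "\<exists>D. \<forall>k. norm (X k) \<le> D * (1/2::real) ^ k"
    by (rule geometric_bound_if_eventually[rotated]) simp
  then obtain D where "\<forall>k. norm (X k) \<le> D * (1/2::real) ^ k" ..
  then show ?thesis unfolding exp_decay_def by (intro exI[of _ D] exI[of _ "1/2::real"]) auto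
qed

lemma exp_decay_of_int_eventually_zero:
  assumes "exp_decay (\<lambda>k. of_int (X k) :: 'a::real_normed_algebra_1)"
  shows "eventually (\<lambda>k. X k = 0) sequentially"
proof -
  obtain C r where r: "0 \<le> r" "r < 1" and C: "\<And>k. \<bar>real_of_int (X k)\<bar> \<le> C * r ^ k"
    using assms unfolding exp_decay_def by auto
  have "(\<lambda>k. C * r ^ k) \<longlonglongrightarrow> C * 0"
    using r by (intro tendsto_mult tendsto_const LIMSEQ_power_zero) auto
  then have "eventually (\<lambda>k. C * r ^ k < 1) sequentially"
    by (intro order_tendstoD) auto
  then show ?thesis
  proof eventually_elim
    case (elim k)
    then show ?case using C[of k] by linarith
  qed
qed

lemma exp_decay_cancel_left:
  fixes X :: "nat \<Rightarrow> 'a::real_normed_field"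
  assumes "c \<noteq> 0" and "exp_decay (\<lambda>k. c * X k)"
  shows "exp_decay X"
proof -
  obtain C r where "0 \<le> r" "r < 1" and C: "\<And>k. norm (c * X k) \<le> C * r ^ k"
    using assms(2) unfolding exp_decay_def by blast
  moreover have "norm (X k) \<le> (C / norm c) * r ^ k" for k
    using C[of k] assms(1) by (simp add: norm_mult field_simps)
  ultimately show ?thesis unfolding exp_decay_def by blast
qed

lemma subexponential_if_limsup_root_le_one:
  fixes X :: "nat \<Rightarrow> real"
  assumes "limsup (\<lambda>n. ereal (root n \<bar>X n\<bar>)) \<le> 1"
  shows "subexponential X"
  unfolding subexponential_def
proof (intro allI impI)
  fix \<rho> :: real assume \<rho>: "\<rho> > 1"
  have "limsup (\<lambda>n. ereal (root n \<bar>X n\<bar>)) < ereal \<rho>"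
    using assms \<rho> by (simp add: le_less_trans)
  then have "eventually (\<lambda>n. ereal (root n \<bar>X n\<bar>) < ereal \<rho>) sequentially"
    by (rule Limsup_lessD)
  then have "eventually (\<lambda>n. norm (X n) \<le> 1 * \<rho> ^ n) sequentially"
    unfolding eventually_sequentially
  proof (elim exE, intro exI allI impI)
    fix N n assume N: "\<forall>n\<ge>N. ereal (root n \<bar>X n\<bar>) < ereal \<rho>" and n: "n \<ge> Suc N"
    then have "root n \<bar>X n\<bar> ^ n \<le> \<rho> ^ n"
      by (intro power_mono) (auto intro: less_imp_le)
    then show "norm (X n) \<le> 1 * \<rho> ^ n" using n by (simp add: real_root_pow_pos2)
  qed
  then show "\<exists>C. \<forall>k. norm (X k) \<le> C * \<rho> ^ k"
    by (rule geometric_bound_if_eventually[rotated]) (use \<rho> in simp)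
qed

lemma limsup_root_le_one_if_subexponential:
  fixes X :: "nat \<Rightarrow> real"
  assumes "subexponential X"
  shows "limsup (\<lambda>n. ereal (root n \<bar>X n\<bar>)) \<le> 1"
proof (rule ereal_le_epsilon2)
  fix e :: real assume e: "e > 0"
  define \<rho> where "\<rho> = 1 + e / 2"
  obtain C where C: "\<And>k. \<bar>X k\<bar> \<le> C * \<rho> ^ k"
    using assms e unfolding subexponential_def \<rho>_def by fastforce
  have "C \<ge> 0" using C[of 0] by simp
  have "(\<lambda>n. root n (C + 1) * \<rho>) \<longlonglongrightarrow> 1 * \<rho>"
    using \<open>C \<ge> 0\<close> by (intro tendsto_mult LIMSEQ_root_const tendsto_const) simp
  moreover have "1 * \<rho> < 1 + e" using e unfolding \<rho>_def by simp
  ultimately have "eventually (\<lambda>n. root n (C + 1) * \<rho> < 1 + e) sequentially"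
    by (rule order_tendstoD)
  then have "eventually (\<lambda>n. ereal (root n \<bar>X n\<bar>) \<le> 1 + ereal e) sequentially"
    using eventually_gt_at_top[of 0]
  proof eventually_elim
    case (elim n)
    have "C * \<rho> ^ n \<le> (C + 1) * \<rho> ^ n"
      using e by (intro mult_right_mono) (simp_all add: \<rho>_def)
    then have "\<bar>X n\<bar> \<le> (C + 1) * \<rho> ^ n"
      using C[of n] by linarith
    then have "root n \<bar>X n\<bar> \<le> root n ((C + 1) * \<rho> ^ n)"
      using elim by (intro real_root_le_mono) auto
    also have "\<dots> = root n (C + 1) * \<rho>"
      using elim e by (simp add: \<rho>_def real_root_mult real_root_power_cancel)
    finally show ?case using elim by simp
  qed
  then show "limsup (\<lambda>n. ereal (root n \<bar>X n\<bar>)) \<le> 1 + ereal e"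
    by (rule Limsup_bounded)
qed

lemma limsup_root_le_one_iff_subexponential:
  fixes X :: "nat \<Rightarrow> real"
  shows "limsup (\<lambda>n. ereal (root n \<bar>X n\<bar>)) \<le> 1 \<longleftrightarrow> subexponential X"
  using subexponential_if_limsup_root_le_one limsup_root_le_one_if_subexponential by blast

lemma subexponential_int_iff:
  "subexponential_int u \<longleftrightarrow> subexponential (\<lambda>k. u (int k)) \<and> subexponential (\<lambda>k. u (- int k))"
proof safe
  assume "subexponential (\<lambda>k. u (int k))" "subexponential (\<lambda>k. u (- int k))"
  show "subexponential_int u"
    unfolding subexponential_int_def
  proof (intro allI impI)
    fix \<rho> :: real assume "\<rho> > 1"
    then obtain C1 C2 where C1: "\<And>k. norm (u (int k)) \<le> C1 * \<rho> ^ k"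
      and C2: "\<And>k. norm (u (- int k)) \<le> C2 * \<rho> ^ k"
      using \<open>subexponential (\<lambda>k. u (int k))\<close> \<open>subexponential (\<lambda>k. u (- int k))\<close>
      unfolding subexponential_def by meson
    have "norm (u n) \<le> max C1 C2 * \<rho> ^ nat \<bar>n\<bar>" for n
    proof -
      have "norm (u n) \<le> C1 * \<rho> ^ nat \<bar>n\<bar> \<or> norm (u n) \<le> C2 * \<rho> ^ nat \<bar>n\<bar>"
        using C1[of "nat n"] C2[of "nat (- n)"] by (cases "n \<ge> 0") simp_all
      moreover have "C1 * \<rho> ^ nat \<bar>n\<bar> \<le> max C1 C2 * \<rho> ^ nat \<bar>n\<bar>"
        "C2 * \<rho> ^ nat \<bar>n\<bar> \<le> max C1 C2 * \<rho> ^ nat \<bar>n\<bar>"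
        using \<open>\<rho> > 1\<close> by (intro mult_right_mono; simp)+
      ultimately show ?thesis by linarith
    qed
    then show "\<exists>C. \<forall>n. norm (u n) \<le> C * \<rho> ^ nat \<bar>n\<bar>" by blast
  qed
qed (unfold subexponential_int_def subexponential_def; metis nat_int abs_minus_cancel of_nat_0_le_iff abs_of_nonneg)+

lemma almost_convergent_iff_subexponential_int:
  "almost_convergent c \<longleftrightarrow> subexponential_int (\<lambda>n. of_int (c n) :: 'a::real_normed_algebra_1)"
proof -
  have norms: "subexponential (\<lambda>k. of_int (x k) :: 'a) \<longleftrightarrow> subexponential (\<lambda>k. real_of_int (x k))" for x
    by (simp add: subexponential_def)
  show ?thesis
    unfolding almost_convergent_def subexponential_int_iff norms limsup_root_le_one_iff_subexponential ..
qed

lemma subexponential_int_shift_sum: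
  fixes u :: "int \<Rightarrow> 'a::real_normed_field"
  assumes "subexponential_int u" and "finite S"
  shows "subexponential_int (\<lambda>n. \<Sum>k\<in>S. a k * u (n - s k))"
  unfolding subexponential_int_def
proof (intro allI impI)
  fix \<rho> :: real assume \<rho>: "\<rho> > 1"
  obtain C where C: "\<And>n. norm (u n) \<le> C * \<rho> ^ nat \<bar>n\<bar>"
    using assms(1) \<rho> unfolding subexponential_int_def by blast
  have "C \<ge> 0" using C[of 0] by (simp add: order_trans[OF norm_ge_zero])
  define D where "D = (\<Sum>k\<in>S. norm (a k) * C * \<rho> ^ nat \<bar>s k\<bar>)"
  have "norm (\<Sum>k\<in>S. a k * u (n - s k)) \<le> D * \<rho> ^ nat \<bar>n\<bar>" for n
  proof -
    have "norm (\<Sum>k\<in>S. a k * u (n - s k)) \<le> (\<Sum>k\<in>S. norm (a k) * norm (u (n - s k)))"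
      by (rule order_trans[OF norm_sum]) (simp add: norm_mult)
    also have "\<dots> \<le> (\<Sum>k\<in>S. norm (a k) * C * \<rho> ^ nat \<bar>s k\<bar> * \<rho> ^ nat \<bar>n\<bar>)"
    proof (intro sum_mono)
      fix k
      have "\<rho> ^ nat \<bar>n - s k\<bar> \<le> \<rho> ^ (nat \<bar>s k\<bar> + nat \<bar>n\<bar>)"
        using \<rho> by (intro power_increasing) auto
      then have "C * \<rho> ^ nat \<bar>n - s k\<bar> \<le> C * (\<rho> ^ nat \<bar>s k\<bar> * \<rho> ^ nat \<bar>n\<bar>)"
        using \<open>C \<ge> 0\<close> by (simp add: power_add mult_left_mono)
      then have "norm (u (n - s k)) \<le> C * (\<rho> ^ nat \<bar>s k\<bar> * \<rho> ^ nat \<bar>n\<bar>)"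
        using C[of "n - s k"] by linarith
      then show "norm (a k) * norm (u (n - s k)) \<le> norm (a k) * C * \<rho> ^ nat \<bar>s k\<bar> * \<rho> ^ nat \<bar>n\<bar>"
        by (simp add: mult_left_mono mult.assoc)
    qed
    also have "\<dots> = D * \<rho> ^ nat \<bar>n\<bar>" unfolding D_def by (simp add: sum_distrib_right)
    finally show ?thesis .
  qed
  then show "\<exists>D. \<forall>n. norm (\<Sum>k\<in>S. a k * u (n - s k)) \<le> D * \<rho> ^ nat \<bar>n\<bar>" by blast
qed

lemma first_order_small_root:
  fixes W :: "nat \<Rightarrow> 'a::real_normed_field"
  assumes \<alpha>: "norm \<alpha> < 1" and V: "exp_decay (\<lambda>k. W (Suc k) - \<alpha> * W k)"
  shows "exp_decay W"
proof -
  obtain C r where r: "0 \<le> r" "r < 1" and C: "\<And>k. norm (W (Suc k) - \<alpha> * W k) \<le> C * r ^ k"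
    using V unfolding exp_decay_def by blast
  have "C \<ge> 0" using C[of 0] by (simp add: order_trans[OF norm_ge_zero])
  define r' where "r' = max r ((1 + norm \<alpha>) / 2)"
  have r': "r \<le> r'" "norm \<alpha> < r'" "r' < 1"
    using \<alpha> r unfolding r'_def by (auto simp: less_max_iff_disj)
  define D where "D = norm (W 0) + C / (r' - norm \<alpha>)"
  have D: "C + norm \<alpha> * D \<le> D * r'"
  proof -
    have "r' - norm \<alpha> \<noteq> 0" using r' by simp
    then have "D * (r' - norm \<alpha>) = norm (W 0) * (r' - norm \<alpha>) + C"
      unfolding D_def by (simp add: distrib_right)
    moreover have "norm (W 0) * (r' - norm \<alpha>) \<ge> 0" using r' by simp
    ultimately show ?thesis by (simp add: algebra_simps)
  qed
  have "norm (W k) \<le> D * r' ^ k" for k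
  proof (induction k)
    case 0
    show ?case using \<open>C \<ge> 0\<close> r' by (simp add: D_def)
  next
    case (Suc k)
    have "norm (W (Suc k)) \<le> norm (W (Suc k) - \<alpha> * W k) + norm \<alpha> * norm (W k)"
      by (metis norm_mult norm_triangle_sub add.commute)
    also have "\<dots> \<le> C * r' ^ k + norm \<alpha> * (D * r' ^ k)"
    proof (intro add_mono mult_left_mono)
      show "norm (W (Suc k) - \<alpha> * W k) \<le> C * r' ^ k"
        using C[of k] mult_left_mono[OF power_mono[OF r'(1) r(1), of k] \<open>C \<ge> 0\<close>] by linarith
    qed (use Suc.IH in simp_all)
    also have "\<dots> = (C + norm \<alpha> * D) * r' ^ k" by (simp add: algebra_simps)
    also have "\<dots> \<le> D * r' * r' ^ k"
      using D r' r by (intro mult_right_mono) simp_all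
    finally show ?case by (simp add: mult.assoc)
  qed
  then show ?thesis unfolding exp_decay_def using r r' by (intro exI[of _ D] exI[of _ r']) simp
qed

lemma first_order_backward_sum:
  fixes W :: "nat \<Rightarrow> 'a::field"
  assumes "\<alpha> \<noteq> 0"
  shows "W k = W (k + K) / \<alpha> ^ K - (\<Sum>j<K. (W (Suc (k + j)) - \<alpha> * W (k + j)) / \<alpha> ^ Suc j)"
proof (induction K)
  case (Suc K)
  have "W (k + K) / \<alpha> ^ K = W (k + Suc K) / \<alpha> ^ Suc K - (W (Suc (k + K)) - \<alpha> * W (k + K)) / \<alpha> ^ Suc K"
    using assms by (simp add: field_simps)
  with Suc.IH show ?case by simp
qed simp

lemma first_order_tail_bound:
  fixes V :: "nat \<Rightarrow> 'a::real_normed_field"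
  assumes \<alpha>: "norm \<alpha> > 1" and r: "0 \<le> r" "r \<le> 1" and C: "\<And>k. norm (V k) \<le> C * r ^ k"
  shows "norm (\<Sum>j<K. V (k + j) / \<alpha> ^ Suc j) \<le> C / (norm \<alpha> - 1) * r ^ k"
proof -
  have "C \<ge> 0" using C[of 0] by (simp add: order_trans[OF norm_ge_zero])
  have "\<alpha> \<noteq> 0" using \<alpha> by auto
  define q where "q = 1 / norm \<alpha>"
  have q: "0 \<le> q" "q < 1" using \<alpha> unfolding q_def by (auto simp: divide_less_eq)
  have "norm (\<Sum>j<K. V (k + j) / \<alpha> ^ Suc j) \<le> (\<Sum>j<K. C * r ^ k * q * q ^ j)"
  proof (rule order_trans[OF norm_sum sum_mono])
    fix j
    have "C * r ^ (k + j) \<le> C * r ^ k"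
      using r \<open>C \<ge> 0\<close> by (intro mult_left_mono) (simp_all add: power_decreasing)
    then have "norm (V (k + j)) / norm \<alpha> ^ Suc j \<le> C * r ^ k / norm \<alpha> ^ Suc j"
      using C[of "k + j"] by (intro divide_right_mono) simp_all
    also have "\<dots> = C * r ^ k * q * q ^ j"
      using \<alpha> by (simp add: q_def power_one_over)
    finally show "norm (V (k + j) / \<alpha> ^ Suc j) \<le> C * r ^ k * q * q ^ j"
      by (simp only: norm_divide norm_power)
  qed
  also have "\<dots> = C * r ^ k * q * (\<Sum>j<K. q ^ j)" by (simp add: sum_distrib_left)
  also have "\<dots> \<le> C * r ^ k * q * (1 / (1 - q))"
  proof (intro mult_left_mono)
    show "(\<Sum>j<K. q ^ j) \<le> 1 / (1 - q)"
      using q by (simp add: sum_gp_strict divide_right_mono)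
  qed (use r q \<open>C \<ge> 0\<close> in simp)
  also have "\<dots> = C / (norm \<alpha> - 1) * r ^ k"
    using \<alpha> \<open>\<alpha> \<noteq> 0\<close> unfolding q_def by (simp add: field_simps)
  finally show ?thesis .
qed

(* Solving the recurrence backwards, the boundary term W(k + K) / \<alpha>^K tends to 0 as K \<rightarrow> \<infinity>
   because W grows more slowly than |\<alpha>|^K. *)

lemma first_order_large_root:
  fixes W :: "nat \<Rightarrow> 'a::real_normed_field"
  assumes \<alpha>: "norm \<alpha> > 1" and W: "subexponential W" and V: "exp_decay (\<lambda>k. W (Suc k) - \<alpha> * W k)"
  shows "exp_decay W"
proof -
  obtain C r where r: "0 \<le> r" "r < 1" and C: "\<And>k. norm (W (Suc k) - \<alpha> * W k) \<le> C * r ^ k"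
    using V unfolding exp_decay_def by blast
  have "\<alpha> \<noteq> 0" using \<alpha> by auto
  define \<rho> where "\<rho> = (1 + norm \<alpha>) / 2"
  have \<rho>: "1 < \<rho>" "\<rho> < norm \<alpha>" using \<alpha> unfolding \<rho>_def by auto
  obtain B where B: "\<And>k. norm (W k) \<le> B * \<rho> ^ k"
    using W \<rho> unfolding subexponential_def by blast
  define E where "E = C / (norm \<alpha> - 1)"
  have bound: "norm (W k) \<le> B * \<rho> ^ k * (\<rho> / norm \<alpha>) ^ K + E * r ^ k" for k K
  proof -
    have "norm (W k) \<le> norm (W (k + K) / \<alpha> ^ K)
        + norm (\<Sum>j<K. (W (Suc (k + j)) - \<alpha> * W (k + j)) / \<alpha> ^ Suc j)"
      by (subst first_order_backward_sum[OF \<open>\<alpha> \<noteq> 0\<close>, of W k K]) (rule norm_triangle_ineq4)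
    moreover have "norm (W (k + K) / \<alpha> ^ K) \<le> B * \<rho> ^ k * (\<rho> / norm \<alpha>) ^ K"
      using B[of "k + K"] \<alpha> by (simp add: norm_divide norm_power power_add power_divide divide_right_mono)
    moreover have "norm (\<Sum>j<K. (W (Suc (k + j)) - \<alpha> * W (k + j)) / \<alpha> ^ Suc j) \<le> E * r ^ k"
      unfolding E_def using \<alpha> r C by (intro first_order_tail_bound) simp_all
    ultimately show ?thesis by linarith
  qed
  have "norm (W k) \<le> E * r ^ k" for k
  proof (rule LIMSEQ_le_const)
    have "(\<lambda>K. (\<rho> / norm \<alpha>) ^ K) \<longlonglongrightarrow> 0"
      using \<rho> by (intro LIMSEQ_power_zero) (simp_all add: divide_less_eq)
    then have "(\<lambda>K. B * \<rho> ^ k * (\<rho> / norm \<alpha>) ^ K + E * r ^ k) \<longlonglongrightarrow> B * \<rho> ^ k * 0 + E * r ^ k"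
      by (intro tendsto_add tendsto_mult tendsto_const)
    then show "(\<lambda>K. B * \<rho> ^ k * (\<rho> / norm \<alpha>) ^ K + E * r ^ k) \<longlonglongrightarrow> E * r ^ k"
      by simp
  qed (use bound in blast)
  then show ?thesis unfolding exp_decay_def using r by blast
qed

definition poly_mult_seq :: "'a::comm_ring poly \<Rightarrow> (int \<Rightarrow> 'a) \<Rightarrow> int \<Rightarrow> 'a" where
  "poly_mult_seq p u n = (\<Sum>j\<le>degree p. coeff p j * u (n - int j))"

lemma poly_mult_seq_conv_sum:
  assumes "degree p < N"
  shows "poly_mult_seq p u n = (\<Sum>j<N. coeff p j * u (n - int j))"
  unfolding poly_mult_seq_def
  by (rule sum.mono_neutral_left) (use assms in \<open>auto simp: coeff_eq_0\<close>)

lemma poly_mult_seq_const: "poly_mult_seq [:c:] u n = c * u n"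
  by (simp add: poly_mult_seq_def)

lemma poly_mult_seq_linear_factor:
  fixes a :: "'a::comm_ring_1"
  shows "poly_mult_seq ([:-a, 1:] * q) u n = poly_mult_seq q u (n - 1) - a * poly_mult_seq q u n"
proof -
  define N where "N = Suc (degree q)"
  have e: "[:-a, 1:] * q = pCons 0 q - smult a q" by simp
  have "degree ([:-a, 1:] * q) < Suc N"
    by (rule le_less_trans[OF degree_mult_le]) (simp add: N_def)
  then have "poly_mult_seq ([:-a, 1:] * q) u n
      = (\<Sum>j<Suc N. coeff (pCons 0 q) j * u (n - int j)) - a * (\<Sum>j<Suc N. coeff q j * u (n - int j))"
    unfolding e by (simp add: poly_mult_seq_conv_sum algebra_simps sum_subtractf sum_distrib_left
        del: lessThan_Suc)
  also have "(\<Sum>j<Suc N. coeff (pCons 0 q) j * u (n - int j)) = (\<Sum>j<N. coeff q j * u (n - 1 - int j))"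
    by (subst sum.lessThan_Suc_shift) (simp add: algebra_simps)
  also have "\<dots> = poly_mult_seq q u (n - 1)"
    by (rule poly_mult_seq_conv_sum[symmetric]) (simp add: N_def)
  also have "(\<Sum>j<Suc N. coeff q j * u (n - int j)) = poly_mult_seq q u n"
    by (rule poly_mult_seq_conv_sum[symmetric]) (simp add: N_def)
  finally show ?thesis .
qed

lemma subexponential_int_poly_mult_seq:
  fixes u :: "int \<Rightarrow> 'a::real_normed_field"
  assumes "subexponential_int u"
  shows "subexponential_int (poly_mult_seq p u)"
  unfolding poly_mult_seq_def[abs_def]
  using subexponential_int_shift_sum[OF assms, of "{..degree p}" "coeff p" int] by simp

(* The coefficient of x^n in (x - \<alpha>) w is w(n - 1) - \<alpha> w(n); at n = -k this is the
   recurrence above for W k = w(-k). *)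

lemma exp_decay_linear_factor:
  fixes w :: "int \<Rightarrow> 'a::real_normed_field"
  assumes "norm \<alpha> \<noteq> 1" and "subexponential_int w"
    and "exp_decay (\<lambda>k. w (- int k - 1) - \<alpha> * w (- int k))"
  shows "exp_decay (\<lambda>k. w (- int k))"
proof -
  have "- int (Suc k) = - int k - 1" for k by simp
  then have shift: "(\<lambda>k. w (- int (Suc k)) - \<alpha> * w (- int k)) = (\<lambda>k. w (- int k - 1) - \<alpha> * w (- int k))"
    by (simp only:)
  show ?thesis
  proof (cases "norm \<alpha> < 1")
    case True
    then show ?thesis
      using assms(3) first_order_small_root[of \<alpha> "\<lambda>k. w (- int k)"] unfolding shift by blast
  next
    case False
    then have "norm \<alpha> > 1" using assms(1) by simp
    moreover have "subexponential (\<lambda>k. w (- int k))"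
      using assms(2) unfolding subexponential_int_iff by blast
    ultimately show ?thesis
      using assms(3) first_order_large_root[of \<alpha> "\<lambda>k. w (- int k)"] unfolding shift by blast
  qed
qed

lemma exp_decay_poly_mult_seq:
  fixes p :: "complex poly"
  assumes "p \<noteq> 0" and "\<forall>z. norm z = 1 \<longrightarrow> poly p z \<noteq> 0" and "subexponential_int u"
    and "exp_decay (\<lambda>k. poly_mult_seq p u (- int k))"
  shows "exp_decay (\<lambda>k. u (- int k))"
  using assms
proof (induction "degree p" arbitrary: p rule: less_induct)
  case less
  show ?case
  proof (cases "degree p = 0")
    case True
    then obtain c where "p = [:c:]" by (metis degree_eq_zeroE)
    with less.prems have "c \<noteq> 0" "exp_decay (\<lambda>k. c * u (- int k))"
      by (auto simp: poly_mult_seq_const)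
    then show ?thesis by (rule exp_decay_cancel_left)
  next
    case False
    then have "\<not> constant (poly p)" by (simp add: constant_degree)
    then obtain \<alpha> where root: "poly p \<alpha> = 0"
      using fundamental_theorem_of_algebra by blast
    then obtain q where pq: "p = [:-\<alpha>, 1:] * q"
      by (metis dvdE poly_eq_0_iff_dvd)
    with less.prems(1) have "q \<noteq> 0" by auto
    then have "degree q < degree p"
      unfolding pq by (subst degree_mult_eq) auto
    moreover have "\<forall>z. norm z = 1 \<longrightarrow> poly q z \<noteq> 0"
      using less.prems(2) pq by auto
    moreover have "exp_decay (\<lambda>k. poly_mult_seq q u (- int k))"
    proof (rule exp_decay_linear_factor)
      show "norm \<alpha> \<noteq> 1" using less.prems(2) root by auto
      show "subexponential_int (poly_mult_seq q u)"
        using less.prems(3) by (rule subexponential_int_poly_mult_seq)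
      show "exp_decay (\<lambda>k. poly_mult_seq q u (- int k - 1) - \<alpha> * poly_mult_seq q u (- int k))"
        using less.prems(4) unfolding pq poly_mult_seq_linear_factor .
    qed
    ultimately show ?thesis
      using less.hyps \<open>q \<noteq> 0\<close> less.prems(3) by blast
  qed
qed

lemma sum_support_reindex:
  fixes \<phi> :: "int \<Rightarrow> 'a::comm_ring_1"
  assumes "{k. f k \<noteq> 0} \<subseteq> {s..s + int d}"
  shows "(\<Sum>k | f k \<noteq> 0. of_int (f k) * \<phi> k) = (\<Sum>j\<le>d. of_int (f (s + int j)) * \<phi> (s + int j))"
proof -
  have "(\<Sum>k | f k \<noteq> 0. of_int (f k) * \<phi> k) = (\<Sum>k\<in>{s..s + int d}. of_int (f k) * \<phi> k)"
    by (rule sum.mono_neutral_left) (use assms in auto)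
  also have "\<dots> = (\<Sum>j\<le>d. of_int (f (s + int j)) * \<phi> (s + int j))"
    by (rule sum.reindex_bij_witness[where i = "\<lambda>j. s + int j" and j = "\<lambda>k. nat (k - s)"]) auto
  finally show ?thesis .
qed

lemma laurent_poly_as_poly:
  assumes "laurent_poly f" and "{k. f k \<noteq> 0} \<noteq> {}"
  obtains s and p :: "complex poly"
  where "p \<noteq> 0"
    and "\<And>z. z \<noteq> 0 \<Longrightarrow> laurent_eval f z = z powi s * poly p z"
    and "\<And>g n. poly_mult_seq p (\<lambda>n. of_int (g n)) n = of_int (laurent_mult f g (n + s))"
proof -
  define S where "S = {k. f k \<noteq> 0}"
  have "finite S" "S \<noteq> {}" using assms unfolding laurent_poly_def S_def by auto
  define s where "s = Min S"
  define d where "d = nat (Max S - s)"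
  have S_range: "S \<subseteq> {s..s + int d}"
    using \<open>finite S\<close> \<open>S \<noteq> {}\<close> unfolding s_def d_def by auto
  define p where "p = (\<Sum>j\<le>d. monom (complex_of_int (f (s + int j))) j)"
  have coeff_p: "coeff p j = of_int (f (s + int j))" if "j \<le> d" for j
    unfolding p_def using that by (rule coeff_sum_monom)
  have "degree p \<le> d"
    by (rule degree_le) (auto simp: p_def coeff_sum coeff_monom)
  have "s \<in> S" unfolding s_def using \<open>finite S\<close> \<open>S \<noteq> {}\<close> by simp
  then have "p \<noteq> 0" using coeff_p[of 0] unfolding S_def by auto
  have reindex: "(\<Sum>k\<in>S. of_int (f k) * \<phi> k) = (\<Sum>j\<le>d. coeff p j * \<phi> (s + int j))"
    for \<phi> :: "int \<Rightarrow> complex"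
    using sum_support_reindex[OF S_range[unfolded S_def]] unfolding S_def by (simp add: coeff_p)
  show thesis
  proof
    show "p \<noteq> 0" by fact
    fix z :: complex assume "z \<noteq> 0"
    have "poly p z = (\<Sum>j\<le>d. coeff p j * z ^ j)"
      unfolding poly_altdef
      by (rule sum.mono_neutral_left) (use \<open>degree p \<le> d\<close> in \<open>auto simp: coeff_eq_0\<close>)
    moreover have "laurent_eval f z = (\<Sum>j\<le>d. coeff p j * z powi (s + int j))"
      unfolding laurent_eval_def S_def[symmetric] by (rule reindex)
    ultimately show "laurent_eval f z = z powi s * poly p z"
      using \<open>z \<noteq> 0\<close> by (simp add: sum_distrib_left power_int_add algebra_simps)
  next
    fix g n
    have "poly_mult_seq p (\<lambda>n. of_int (g n)) n = (\<Sum>j\<le>d. coeff p j * of_int (g (n - int j)))"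
      unfolding lessThan_Suc_atMost[symmetric]
      by (rule poly_mult_seq_conv_sum) (use \<open>degree p \<le> d\<close> in simp)
    also have "\<dots> = (\<Sum>k\<in>S. of_int (f k) * of_int (g (n + s - k)))"
      by (subst reindex) simp
    also have "\<dots> = of_int (laurent_mult f g (n + s))"
      unfolding laurent_mult_def S_def by simp
    finally show "poly_mult_seq p (\<lambda>n. of_int (g n)) n = of_int (laurent_mult f g (n + s))" .
  qed
qed

lemma laurent_mult_almost_convergent:
  assumes "laurent_poly f" and "almost_convergent g"
  shows "almost_convergent (laurent_mult f g)"
proof -
  have "subexponential_int (\<lambda>n. real_of_int (g n))"
    using assms(2) by (simp only: almost_convergent_iff_subexponential_int[where 'a = real])
  then have "subexponential_int (\<lambda>n. \<Sum>k\<in>{k. f k \<noteq> 0}. real_of_int (f k) * real_of_int (g (n - k)))"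
    using assms(1) unfolding laurent_poly_def by (intro subexponential_int_shift_sum)
  then show ?thesis
    by (simp add: almost_convergent_iff_subexponential_int[where 'a = real] laurent_mult_def)
qed

lemma laurent_mult_Zac_right:
  assumes "laurent_poly f" and "g \<in> Zac_right"
  shows "laurent_mult f g \<in> Zac_right"
proof -
  obtain m where m: "\<And>n. n < m \<Longrightarrow> g n = 0" and "almost_convergent g"
    using assms(2) unfolding Zac_right_def by blast
  define M where "M = (\<Sum>k | f k \<noteq> 0. \<bar>k\<bar>)"
  have "\<bar>k\<bar> \<le> M" if "f k \<noteq> 0" for k
    unfolding M_def using assms(1) that by (intro member_le_sum) (auto simp: laurent_poly_def)
  then have "laurent_mult f g n = 0" if "n < m - M" for n
    unfolding laurent_mult_def using that m by (intro sum.neutral) force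
  then show ?thesis
    unfolding Zac_right_def using laurent_mult_almost_convergent[OF assms(1)] \<open>almost_convergent g\<close>
    by blast
qed

lemma vanishes_below_if_eventually_zero:
  assumes "eventually (\<lambda>k. g (- int k) = 0) sequentially"
  shows "\<exists>m. \<forall>n<m. g n = 0"
proof -
  obtain K where K: "\<And>k. k \<ge> K \<Longrightarrow> g (- int k) = 0"
    using assms unfolding eventually_sequentially by blast
  have "g n = 0" if "n < - int K" for n
  proof -
    have "K \<le> nat (- n)" and "- int (nat (- n)) = n" using that by auto
    then show ?thesis using K[of "nat (- n)"] by simp
  qed
  then show ?thesis by blast
qed

lemma Zac_right_if_laurent_mult_Zac_right:
  assumes "laurent_poly f" and "hyperbolic f"
    and "g \<in> Zac" and "laurent_mult f g \<in> Zac_right"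
  shows "g \<in> Zac_right"
proof -
  have "laurent_eval f 1 \<noteq> 0"
    using assms(2) unfolding hyperbolic_def by simp
  then have "{k. f k \<noteq> 0} \<noteq> {}"
    unfolding laurent_eval_def by (metis sum.empty)
  then obtain s and p :: "complex poly" where "p \<noteq> 0"
    and eval: "\<And>z. z \<noteq> 0 \<Longrightarrow> laurent_eval f z = z powi s * poly p z"
    and mult: "\<And>g n. poly_mult_seq p (\<lambda>n. of_int (g n)) n = of_int (laurent_mult f g (n + s))"
    using laurent_poly_as_poly[OF assms(1)] by metis
  have "\<forall>z. norm z = 1 \<longrightarrow> poly p z \<noteq> 0"
    using assms(2) eval unfolding hyperbolic_def by (metis mult_zero_right norm_zero zero_neq_one)
  moreover have "subexponential_int (\<lambda>n. complex_of_int (g n))"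
    using assms(3) unfolding Zac_def by (simp add: almost_convergent_iff_subexponential_int[where 'a = complex])
  moreover have "exp_decay (\<lambda>k. poly_mult_seq p (\<lambda>n. complex_of_int (g n)) (- int k))"
  proof (rule exp_decay_eventually_zero)
    obtain m where m: "\<And>n. n < m \<Longrightarrow> laurent_mult f g n = 0"
      using assms(4) unfolding Zac_right_def by blast
    show "eventually (\<lambda>k. poly_mult_seq p (\<lambda>n. complex_of_int (g n)) (- int k) = 0) sequentially"
      unfolding mult eventually_sequentially
      by (rule exI[of _ "nat (s - m + 1)"]) (auto intro!: m)
  qed
  ultimately have "exp_decay (\<lambda>k. complex_of_int (g (- int k)))"
    by (rule exp_decay_poly_mult_seq[OF \<open>p \<noteq> 0\<close>])
  then have "\<exists>m. \<forall>n<m. g n = 0"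
    by (intro vanishes_below_if_eventually_zero exp_decay_of_int_eventually_zero)
  then show ?thesis using assms(3) unfolding Zac_def Zac_right_def by blast
qed

theorem mainTheorem2:
  fixes f :: "int \<Rightarrow> int"
  assumes "laurent_poly f" and "hyperbolic f"
  shows "laurent_mult f ` Zac \<inter> Zac_right = laurent_mult f ` Zac_right"
proof
  show "laurent_mult f ` Zac \<inter> Zac_right \<subseteq> laurent_mult f ` Zac_right"
    using Zac_right_if_laurent_mult_Zac_right[OF assms] by blast
  have "Zac_right \<subseteq> Zac" unfolding Zac_def Zac_right_def by blast
  then show "laurent_mult f ` Zac_right \<subseteq> laurent_mult f ` Zac \<inter> Zac_right"
    using laurent_mult_Zac_right[OF assms(1)] by blast
qed

end
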